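(* Let $R$ be a unital associative ring, $n\ge 1$, and $A=\{a_{j,k}\}\in M_n^\star(R)$. Then $\Lambda^L(A)$ is the unique matrix $B\in\widehat M_n(R)$ for which there exist invertible diagonal $n\times n$ matrices $D_1,D_2$, with the top-left entry of $D_1$ equal to $1$, such that $B=D_1^{-1}AD_2$. Similarly, $\Lambda^R(A)$ is the unique matrix $C\in\widehat M_n(R)$ for which there exist invertible diagonal $n\times n$ matrices $D_3,D_4$, with the top-left entry of $D_4$ equal to $1$, such that $C=D_3^{-1}AD_4$. In particular $\Lambda^L(A)\sim\Lambda^R(A)\sim A$ for each $A\in M_n^\star(R)$.
   Context: $R^*$ denotes the units of $R$; $M_n^\star(R)$ is the set of $n\times n$ matrices over $R$ with all entries in $R^*$. $\widehat M_n(R)=\{A=\{a_{j,k}\}\in M_n(R): a_{1,k}=a_{k,1}=1 \text{ for } 1\le k\le n\}$. For $A\in M_n^\star(R)$: $\Lambda^L(A)_{j,k}=a_{1,1}a_{j,1}^{-1}a_{j,k}a_{1,k}^{-1}$ and $\Lambda^R(A)_{j,k}=a_{j,1}^{-1}a_{j,k}a_{1,k}^{-1}a_{1,1}$. $A\sim B$ means $B=D_1^{-1}AD_2$ for some invertible diagonal matrices $D_1,D_2$. *)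

theory Defs
  imports "Jordan_Normal_Form.Matrix"
begin

definition is_unit_r :: "'a::ring_1 \<Rightarrow> bool" where
  "is_unit_r x \<longleftrightarrow> (\<exists>y. x * y = 1 \<and> y * x = 1)"

definition rinv :: "'a::ring_1 \<Rightarrow> 'a" where
  "rinv x = (THE y. x * y = 1 \<and> y * x = 1)"

text \<open>M_n^star(R): n x n matrices all of whose entries are units. Indices are 0-based,
  so the paper's index 1 is index 0 here.\<close>
definition Mstar :: "nat \<Rightarrow> 'a::ring_1 mat set" where
  "Mstar n = {A. A \<in> carrier_mat n n \<and> (\<forall>j<n. \<forall>k<n. is_unit_r (A $$ (j,k)))}"

definition Mhat :: "nat \<Rightarrow> 'a::ring_1 mat set" where
  "Mhat n = {A. A \<in> carrier_mat n n \<and> (\<forall>k<n. A $$ (0,k) = 1 \<and> A $$ (k,0) = 1)}"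

definition LambdaL :: "'a::ring_1 mat \<Rightarrow> 'a mat" where
  "LambdaL A = mat (dim_row A) (dim_col A)
     (\<lambda>(j,k). A $$ (0,0) * rinv (A $$ (j,0)) * A $$ (j,k) * rinv (A $$ (0,k)))"

definition LambdaR :: "'a::ring_1 mat \<Rightarrow> 'a mat" where
  "LambdaR A = mat (dim_row A) (dim_col A)
     (\<lambda>(j,k). rinv (A $$ (j,0)) * A $$ (j,k) * rinv (A $$ (0,k)) * A $$ (0,0))"

definition inv_diag :: "nat \<Rightarrow> 'a::ring_1 mat \<Rightarrow> bool" where
  "inv_diag n D \<longleftrightarrow> D \<in> carrier_mat n n \<and> diagonal_mat D \<and> invertible_mat D"

definition is_inverse :: "'a::ring_1 mat \<Rightarrow> 'a mat \<Rightarrow> bool" where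
  "is_inverse D E \<longleftrightarrow> inverts_mat D E \<and> inverts_mat E D"

definition diag_rel :: "nat \<Rightarrow> 'a::ring_1 mat \<Rightarrow> 'a mat \<Rightarrow> 'a mat \<Rightarrow> 'a mat \<Rightarrow> bool" where
  "diag_rel n A B D1 D2 \<longleftrightarrow> inv_diag n D1 \<and> inv_diag n D2 \<and>
     (\<exists>E. E \<in> carrier_mat n n \<and> is_inverse D1 E \<and> B = E * A * D2)"

definition dsim :: "nat \<Rightarrow> 'a::ring_1 mat \<Rightarrow> 'a mat \<Rightarrow> bool" where
  "dsim n A B \<longleftrightarrow> (\<exists>D1 D2. diag_rel n A B D1 D2)"

end

theory Submission
  imports Defs
begin

text \<open>Invertible diagonal matrices act on an \<open>n \<times> n\<close> matrix exactly by rescaling its rows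
  and columns with units, and a matrix in \<open>M_n^\<star>(R)\<close> can be rescaled so that its first row and
  first column consist of ones. Fixing one of the factors at position \<open>0\<close> (the first row factor
  for \<open>\<Lambda>^L\<close>, the first column factor for \<open>\<Lambda>^R\<close>) leaves no freedom: the ones in the
  first row and column then determine all other factors. Since \<open>\<sim>\<close> is the equivalence relation
  "differs by unit rescalings", \<open>\<Lambda>^L(A) \<sim> A \<sim> \<Lambda>^R(A)\<close> follows.\<close>

section \<open>Units of a ring\<close>

lemma unit_rinv:
  assumes "is_unit_r (x::'a::ring_1)"
  shows "x * rinv x = 1 \<and> rinv x * x = 1"
proof -
  obtain y where y: "x * y = 1" "y * x = 1" using assms unfolding is_unit_r_def by blast
  have "\<exists>!y. x * y = 1 \<and> y * x = 1"
  proof (rule ex1I[of _ y])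
    fix z assume z: "x * z = 1 \<and> z * x = 1"
    have "z = z * (x * y)" using y by simp
    also have "\<dots> = (z * x) * y" by (simp add: mult.assoc)
    finally show "z = y" using z by simp
  qed (use y in auto)
  then show ?thesis unfolding rinv_def by (rule theI')
qed

lemma rinv_simps[simp]:
  assumes "is_unit_r (x::'a::ring_1)"
  shows "x * rinv x = 1" "rinv x * x = 1" "x * (rinv x * y) = y" "rinv x * (x * y) = y"
  using unit_rinv[OF assms] by (auto simp flip: mult.assoc)

lemma rinv_left_unique:
  assumes "is_unit_r (x::'a::ring_1)" "y * x = 1"
  shows "y = rinv x"
proof -
  have "y = y * (x * rinv x)" using assms by simp
  also have "\<dots> = rinv x" using assms(2) by (simp flip: mult.assoc)
  finally show ?thesis .
qed

lemma rinv_right_unique: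
  assumes "is_unit_r (x::'a::ring_1)" "x * y = 1"
  shows "y = rinv x"
proof -
  have "y = (rinv x * x) * y" using assms by simp
  also have "\<dots> = rinv x" using assms(2) by (simp add: mult.assoc)
  finally show ?thesis .
qed

lemma is_unit_r_rinv: "is_unit_r (x::'a::ring_1) \<Longrightarrow> is_unit_r (rinv x)"
  unfolding is_unit_r_def[of "rinv x"] by (auto dest: unit_rinv)

lemma rinv_rinv[simp]: "is_unit_r (x::'a::ring_1) \<Longrightarrow> rinv (rinv x) = x"
  by (metis is_unit_r_rinv rinv_left_unique rinv_simps(1))

lemma rinv_one[simp]: "rinv (1::'a::ring_1) = 1"
  by (metis is_unit_r_def mult_1 rinv_left_unique)

lemma is_unit_r_mult:
  assumes "is_unit_r (x::'a::ring_1)" "is_unit_r y"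
  shows "is_unit_r (x * y)"
  unfolding is_unit_r_def
  by (rule exI[of _ "rinv y * rinv x"]) (simp add: assms mult.assoc)

lemma rinv_mult:
  assumes "is_unit_r (x::'a::ring_1)" "is_unit_r y"
  shows "rinv (x * y) = rinv y * rinv x"
  by (rule rinv_right_unique[symmetric, OF is_unit_r_mult[OF assms]]) (simp add: assms mult.assoc)

section \<open>Diagonal matrices and rescalings\<close>

definition diag_fun_mat :: "nat \<Rightarrow> (nat \<Rightarrow> 'a::ring_1) \<Rightarrow> 'a mat" where
  "diag_fun_mat n d = mat n n (\<lambda>(i,j). if i = j then d i else 0)"

definition rescale_mat :: "nat \<Rightarrow> (nat \<Rightarrow> 'a::ring_1) \<Rightarrow> 'a mat \<Rightarrow> (nat \<Rightarrow> 'a) \<Rightarrow> 'a mat" where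
  "rescale_mat n e A f = mat n n (\<lambda>(j,k). e j * A $$ (j,k) * f k)"

lemma diag_fun_mat_carrier[simp]: "diag_fun_mat n d \<in> carrier_mat n n"
  and diag_fun_mat_dims[simp]: "dim_row (diag_fun_mat n d) = n" "dim_col (diag_fun_mat n d) = n"
  by (auto simp: diag_fun_mat_def)

lemma diag_fun_mat_index[simp]:
  "i < n \<Longrightarrow> j < n \<Longrightarrow> diag_fun_mat n d $$ (i,j) = (if i = j then d i else 0)"
  by (simp add: diag_fun_mat_def)

lemma rescale_mat_carrier[simp]: "rescale_mat n e A f \<in> carrier_mat n n"
  and rescale_mat_dims[simp]: "dim_row (rescale_mat n e A f) = n" "dim_col (rescale_mat n e A f) = n"
  by (auto simp: rescale_mat_def)

lemma rescale_mat_index[simp]: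
  "j < n \<Longrightarrow> k < n \<Longrightarrow> rescale_mat n e A f $$ (j,k) = e j * A $$ (j,k) * f k"
  by (simp add: rescale_mat_def)

lemma rescale_mat_cong:
  "(\<And>j. j < n \<Longrightarrow> e j = e' j) \<Longrightarrow> (\<And>k. k < n \<Longrightarrow> f k = f' k)
    \<Longrightarrow> rescale_mat n e A f = rescale_mat n e' A f'"
  by (auto intro!: eq_matI)

lemma rescale_mat_rescale_mat:
  "rescale_mat n e' (rescale_mat n e A f) f' = rescale_mat n (\<lambda>j. e' j * e j) A (\<lambda>k. f k * f' k)"
  by (rule eq_matI) (simp_all add: mult.assoc)

lemma rescale_mat_id: "A \<in> carrier_mat n n \<Longrightarrow> rescale_mat n (\<lambda>_. 1) A (\<lambda>_. 1) = A"
  by (rule eq_matI) auto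

lemma diag_fun_mat_mult:
  assumes "M \<in> carrier_mat n m"
  shows "diag_fun_mat n d * M = mat n m (\<lambda>(i,j). d i * M $$ (i,j))"
  using assms
  by (auto intro!: eq_matI simp: scalar_prod_def diag_fun_mat_def row_def col_def
      if_distrib[where f="\<lambda>x. x * _"] cong: if_cong)

lemma mult_diag_fun_mat:
  assumes "M \<in> carrier_mat m n"
  shows "M * diag_fun_mat n d = mat m n (\<lambda>(i,j). M $$ (i,j) * d j)"
  using assms
  by (auto intro!: eq_matI simp: scalar_prod_def diag_fun_mat_def row_def col_def
      if_distrib[where f="\<lambda>x. _ * x"] cong: if_cong)

lemma diag_fun_mat_mult_mult:
  assumes "A \<in> carrier_mat n n"
  shows "diag_fun_mat n e * A * diag_fun_mat n f = rescale_mat n e A f"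
proof -
  have "diag_fun_mat n e * A = mat n n (\<lambda>(i,j). e i * A $$ (i,j))"
    by (rule diag_fun_mat_mult[OF assms])
  then show ?thesis
    by (simp add: mult_diag_fun_mat[of _ n n]) (rule eq_matI, simp_all)
qed

lemma diag_fun_mat_mult_inverse:
  "(\<And>i. i < n \<Longrightarrow> d i * e i = 1) \<Longrightarrow> diag_fun_mat n d * diag_fun_mat n e = 1\<^sub>m n"
  by (subst diag_fun_mat_mult[OF diag_fun_mat_carrier], rule eq_matI) auto

lemma inverse_diag_fun_mat:
  assumes "\<And>i. i < n \<Longrightarrow> is_unit_r (d i)"
  shows "inv_diag n (diag_fun_mat n d)"
    and "is_inverse (diag_fun_mat n d) (diag_fun_mat n (\<lambda>i. rinv (d i)))"
  using diag_fun_mat_mult_inverse[of n d "\<lambda>i. rinv (d i)"]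
    diag_fun_mat_mult_inverse[of n "\<lambda>i. rinv (d i)" d]
  by (auto simp: assms inv_diag_def is_inverse_def invertible_mat_def inverts_mat_def
      diagonal_mat_def)

lemma inv_diag_eq_diag_fun_mat:
  "inv_diag n D \<Longrightarrow> D = diag_fun_mat n (\<lambda>i. D $$ (i,i))"
  unfolding inv_diag_def diagonal_mat_def by (auto intro!: eq_matI)

lemma is_inverse_carrier:
  assumes "D \<in> carrier_mat n n" "is_inverse D E"
  shows "E \<in> carrier_mat n n"
proof -
  have "D * E = 1\<^sub>m n" "E * D = 1\<^sub>m (dim_row E)"
    using assms unfolding is_inverse_def inverts_mat_def by auto
  then show ?thesis
    using assms(1) by (metis carrier_matI index_mult_mat(2,3) index_one_mat(2,3) carrier_matD(2))
qed

lemma inv_diag_unit_entry: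
  assumes D: "inv_diag n D" and i: "i < n"
  shows "is_unit_r (D $$ (i,i))"
proof -
  obtain E where E: "is_inverse D E"
    using D unfolding inv_diag_def invertible_mat_def is_inverse_def by blast
  have Dc: "D \<in> carrier_mat n n" using D unfolding inv_diag_def by simp
  have Ec: "E \<in> carrier_mat n n" by (rule is_inverse_carrier[OF Dc E])
  define d where "d i = D $$ (i,i)" for i
  have Dd: "D = diag_fun_mat n d"
    unfolding d_def by (rule inv_diag_eq_diag_fun_mat[OF D])
  have "diag_fun_mat n d * E = 1\<^sub>m n" "E * diag_fun_mat n d = 1\<^sub>m n"
    using E Ec unfolding Dd is_inverse_def inverts_mat_def by auto
  then have "(diag_fun_mat n d * E) $$ (i,i) = 1" "(E * diag_fun_mat n d) $$ (i,i) = 1"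
    using i by simp_all
  then have "d i * E $$ (i,i) = 1" "E $$ (i,i) * d i = 1"
    using i Ec by (simp_all add: diag_fun_mat_mult mult_diag_fun_mat)
  then show ?thesis unfolding is_unit_r_def d_def by blast
qed

lemma is_inverse_inv_diag:
  assumes D: "inv_diag n D" and E: "is_inverse D E"
  shows "E = diag_fun_mat n (\<lambda>i. rinv (D $$ (i,i)))"
proof -
  let ?G = "diag_fun_mat n (\<lambda>i. rinv (D $$ (i,i)))"
  have Dc: "D \<in> carrier_mat n n" using D unfolding inv_diag_def by simp
  have Ec: "E \<in> carrier_mat n n" by (rule is_inverse_carrier[OF Dc E])
  have "diag_fun_mat n (\<lambda>i. D $$ (i,i)) * ?G = 1\<^sub>m n"
    by (rule diag_fun_mat_mult_inverse) (simp add: inv_diag_unit_entry[OF D])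
  then have "D * ?G = 1\<^sub>m n" using inv_diag_eq_diag_fun_mat[OF D] by simp
  then have "E = E * (D * ?G)" using Ec by simp
  also have "\<dots> = (E * D) * ?G" by (rule assoc_mult_mat[symmetric, OF Ec Dc diag_fun_mat_carrier])
  also have "\<dots> = ?G" using E Ec unfolding is_inverse_def inverts_mat_def by simp
  finally show ?thesis .
qed

section \<open>Diagonal equivalence as rescaling\<close>

lemma diag_rel_eq_rescale_mat:
  assumes "diag_rel n A B D1 D2" "A \<in> carrier_mat n n"
  shows "B = rescale_mat n (\<lambda>i. rinv (D1 $$ (i,i))) A (\<lambda>k. D2 $$ (k,k))"
proof -
  obtain E where "is_inverse D1 E" "B = E * A * D2" and D1: "inv_diag n D1" and D2: "inv_diag n D2"
    using assms(1) unfolding diag_rel_def by blast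
  then have "B = diag_fun_mat n (\<lambda>i. rinv (D1 $$ (i,i))) * A * diag_fun_mat n (\<lambda>k. D2 $$ (k,k))"
    using is_inverse_inv_diag inv_diag_eq_diag_fun_mat by metis
  then show ?thesis by (simp add: diag_fun_mat_mult_mult[OF assms(2)])
qed

lemma diag_rel_rescale_mat:
  assumes "A \<in> carrier_mat n n" "\<And>i. i < n \<Longrightarrow> is_unit_r (d i) \<and> is_unit_r (f i)"
  shows "diag_rel n A (rescale_mat n (\<lambda>i. rinv (d i)) A f) (diag_fun_mat n d) (diag_fun_mat n f)"
proof -
  have "rescale_mat n (\<lambda>i. rinv (d i)) A f = diag_fun_mat n (\<lambda>i. rinv (d i)) * A * diag_fun_mat n f"
    by (simp add: diag_fun_mat_mult_mult[OF assms(1)])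
  then show ?thesis
    using inverse_diag_fun_mat[of n d] inverse_diag_fun_mat[of n f] assms(2)
    unfolding diag_rel_def by (blast intro: diag_fun_mat_carrier)
qed

lemma dsim_iff_rescale_mat:
  assumes "A \<in> carrier_mat n n"
  shows "dsim n A B \<longleftrightarrow>
    (\<exists>e f. (\<forall>i<n. is_unit_r (e i) \<and> is_unit_r (f i)) \<and> B = rescale_mat n e A f)"
proof
  assume "dsim n A B"
  then obtain D1 D2 where R: "diag_rel n A B D1 D2" unfolding dsim_def by blast
  then have "inv_diag n D1" "inv_diag n D2" unfolding diag_rel_def by auto
  then show "\<exists>e f. (\<forall>i<n. is_unit_r (e i) \<and> is_unit_r (f i)) \<and> B = rescale_mat n e A f"
    using diag_rel_eq_rescale_mat[OF R assms]
    by (intro exI[of _ "\<lambda>i. rinv (D1 $$ (i,i))"] exI[of _ "\<lambda>k. D2 $$ (k,k)"])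
      (simp add: is_unit_r_rinv inv_diag_unit_entry)
next
  assume "\<exists>e f. (\<forall>i<n. is_unit_r (e i) \<and> is_unit_r (f i)) \<and> B = rescale_mat n e A f"
  then obtain e f where u: "\<forall>i<n. is_unit_r (e i) \<and> is_unit_r (f i)" and B: "B = rescale_mat n e A f"
    by blast
  have "B = rescale_mat n (\<lambda>i. rinv (rinv (e i))) A f"
    unfolding B using u by (intro rescale_mat_cong) auto
  with diag_rel_rescale_mat[OF assms, of "\<lambda>i. rinv (e i)" f] u show "dsim n A B"
    unfolding dsim_def by (metis is_unit_r_rinv)
qed

lemma dsim_carrier: "A \<in> carrier_mat n n \<Longrightarrow> dsim n A B \<Longrightarrow> B \<in> carrier_mat n n"
  by (auto simp: dsim_iff_rescale_mat)

lemma dsim_sym: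
  assumes "A \<in> carrier_mat n n" "dsim n A B"
  shows "dsim n B A"
proof -
  obtain e f where u: "\<forall>i<n. is_unit_r (e i) \<and> is_unit_r (f i)" and B: "B = rescale_mat n e A f"
    using assms by (auto simp: dsim_iff_rescale_mat)
  have "rescale_mat n (\<lambda>i. rinv (e i)) B (\<lambda>i. rinv (f i)) = rescale_mat n (\<lambda>_. 1) A (\<lambda>_. 1)"
    unfolding B rescale_mat_rescale_mat using u by (intro rescale_mat_cong) auto
  then have "A = rescale_mat n (\<lambda>i. rinv (e i)) B (\<lambda>i. rinv (f i))"
    by (simp add: rescale_mat_id[OF assms(1)])
  then have "\<exists>e' f'. (\<forall>i<n. is_unit_r (e' i) \<and> is_unit_r (f' i)) \<and> A = rescale_mat n e' B f'"
    using u by (intro exI[of _ "\<lambda>i. rinv (e i)"] exI[of _ "\<lambda>i. rinv (f i)"]) (simp add: is_unit_r_rinv)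
  moreover have "B \<in> carrier_mat n n" using B by simp
  ultimately show ?thesis by (simp add: dsim_iff_rescale_mat)
qed

lemma dsim_trans:
  assumes "A \<in> carrier_mat n n" "dsim n A B" "dsim n B C"
  shows "dsim n A C"
proof -
  obtain e f where u: "\<forall>i<n. is_unit_r (e i) \<and> is_unit_r (f i)" and B: "B = rescale_mat n e A f"
    using assms(1,2) by (auto simp: dsim_iff_rescale_mat)
  obtain e' f' where u': "\<forall>i<n. is_unit_r (e' i) \<and> is_unit_r (f' i)" and C: "C = rescale_mat n e' B f'"
    using dsim_carrier[OF assms(1,2)] assms(3) by (auto simp: dsim_iff_rescale_mat)
  show ?thesis
    unfolding dsim_iff_rescale_mat[OF assms(1)] C B rescale_mat_rescale_mat
    using u u' by (intro exI[of _ "\<lambda>j. e' j * e j"] exI[of _ "\<lambda>k. f k * f' k"]) (auto intro: is_unit_r_mult)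
qed

section \<open>The normal forms \<open>\<Lambda>^L\<close> and \<open>\<Lambda>^R\<close>\<close>

lemma Mstar_carrier: "A \<in> Mstar n \<Longrightarrow> A \<in> carrier_mat n n"
  and Mstar_unit: "A \<in> Mstar n \<Longrightarrow> j < n \<Longrightarrow> k < n \<Longrightarrow> is_unit_r (A $$ (j,k))"
  by (auto simp: Mstar_def)

lemma LambdaL_eq_rescale_mat:
  "A \<in> carrier_mat n n \<Longrightarrow>
    LambdaL A = rescale_mat n (\<lambda>j. A $$ (0,0) * rinv (A $$ (j,0))) A (\<lambda>k. rinv (A $$ (0,k)))"
  by (auto simp: LambdaL_def rescale_mat_def)

lemma LambdaR_eq_rescale_mat:
  "A \<in> carrier_mat n n \<Longrightarrow>
    LambdaR A = rescale_mat n (\<lambda>j. rinv (A $$ (j,0))) A (\<lambda>k. rinv (A $$ (0,k)) * A $$ (0,0))"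
  by (rule eq_matI) (simp_all add: LambdaR_def mult.assoc)

lemma LambdaL_in_Mhat:
  assumes A: "A \<in> Mstar n"
  shows "LambdaL A \<in> Mhat n"
  using LambdaL_eq_rescale_mat[OF Mstar_carrier[OF A]] Mstar_unit[OF A]
  by (auto simp: Mhat_def mult.assoc)

lemma LambdaR_in_Mhat:
  assumes A: "A \<in> Mstar n"
  shows "LambdaR A \<in> Mhat n"
  using LambdaR_eq_rescale_mat[OF Mstar_carrier[OF A]] Mstar_unit[OF A]
  by (auto simp: Mhat_def mult.assoc)

lemma diag_rel_LambdaL:
  assumes A: "A \<in> Mstar n" and n: "0 < n"
  shows "diag_rel n A (LambdaL A)
    (diag_fun_mat n (\<lambda>j. A $$ (j,0) * rinv (A $$ (0,0)))) (diag_fun_mat n (\<lambda>k. rinv (A $$ (0,k))))"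
proof -
  note u = Mstar_unit[OF A]
  have "LambdaL A = rescale_mat n (\<lambda>j. rinv (A $$ (j,0) * rinv (A $$ (0,0)))) A (\<lambda>k. rinv (A $$ (0,k)))"
    unfolding LambdaL_eq_rescale_mat[OF Mstar_carrier[OF A]]
    by (rule rescale_mat_cong) (simp_all add: n u rinv_mult is_unit_r_rinv)
  then show ?thesis
    by (simp add: diag_rel_rescale_mat Mstar_carrier[OF A] n u is_unit_r_mult is_unit_r_rinv)
qed

lemma diag_rel_LambdaR:
  assumes A: "A \<in> Mstar n" and n: "0 < n"
  shows "diag_rel n A (LambdaR A)
    (diag_fun_mat n (\<lambda>j. A $$ (j,0))) (diag_fun_mat n (\<lambda>k. rinv (A $$ (0,k)) * A $$ (0,0)))"
  using diag_rel_rescale_mat[OF Mstar_carrier[OF A], of "\<lambda>j. A $$ (j,0)" "\<lambda>k. rinv (A $$ (0,k)) * A $$ (0,0)"]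
  by (simp add: LambdaR_eq_rescale_mat[OF Mstar_carrier[OF A]] n Mstar_unit[OF A]
      is_unit_r_mult is_unit_r_rinv)

lemma rescale_mat_in_Mhat_eq_LambdaL:
  assumes A: "A \<in> Mstar n" and n: "0 < n" and e0: "e 0 = 1"
    and B: "rescale_mat n e A f \<in> Mhat n"
  shows "rescale_mat n e A f = LambdaL A"
proof -
  note u = Mstar_unit[OF A]
  have first: "e 0 * A $$ (0,k) * f k = 1" "e k * A $$ (k,0) * f 0 = 1" if "k < n" for k
    using B that n unfolding Mhat_def by auto
  have f: "f k = rinv (A $$ (0,k))" if "k < n" for k
    using first(1)[OF that] e0 by (intro rinv_right_unique) (simp_all add: u n that)
  have e: "e j = A $$ (0,0) * rinv (A $$ (j,0))" if "j < n" for j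
  proof -
    have "e j * (A $$ (j,0) * rinv (A $$ (0,0))) = 1"
      using first(2)[OF that] f[OF n] by (simp add: mult.assoc)
    then have "e j = rinv (A $$ (j,0) * rinv (A $$ (0,0)))"
      by (intro rinv_left_unique) (simp_all add: u n that is_unit_r_mult is_unit_r_rinv)
    then show ?thesis
      by (simp add: u n that rinv_mult is_unit_r_rinv)
  qed
  show ?thesis
    unfolding LambdaL_eq_rescale_mat[OF Mstar_carrier[OF A]] by (rule rescale_mat_cong) (simp_all add: e f)
qed

lemma rescale_mat_in_Mhat_eq_LambdaR:
  assumes A: "A \<in> Mstar n" and n: "0 < n" and f0: "f 0 = 1"
    and B: "rescale_mat n e A f \<in> Mhat n"
  shows "rescale_mat n e A f = LambdaR A"
proof -
  note u = Mstar_unit[OF A]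
  have first: "e 0 * A $$ (0,k) * f k = 1" "e k * A $$ (k,0) * f 0 = 1" if "k < n" for k
    using B that n unfolding Mhat_def by auto
  have e: "e j = rinv (A $$ (j,0))" if "j < n" for j
    using first(2)[OF that] f0 by (intro rinv_left_unique) (simp_all add: u n that)
  have f: "f k = rinv (A $$ (0,k)) * A $$ (0,0)" if "k < n" for k
  proof -
    have "(rinv (A $$ (0,0)) * A $$ (0,k)) * f k = 1"
      using first(1)[OF that] e[OF n] by simp
    then have "f k = rinv (rinv (A $$ (0,0)) * A $$ (0,k))"
      by (intro rinv_right_unique) (simp_all add: u n that is_unit_r_mult is_unit_r_rinv)
    then show ?thesis
      by (simp add: u n that rinv_mult is_unit_r_rinv)
  qed
  show ?thesis
    unfolding LambdaR_eq_rescale_mat[OF Mstar_carrier[OF A]] by (rule rescale_mat_cong) (simp_all add: e f)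
qed

lemma LambdaL_unique:
  assumes "A \<in> Mstar n" "0 < n" "B \<in> Mhat n" "diag_rel n A B D1 D2" "D1 $$ (0,0) = 1"
  shows "B = LambdaL A"
  using rescale_mat_in_Mhat_eq_LambdaL[of A n "\<lambda>i. rinv (D1 $$ (i,i))" "\<lambda>k. D2 $$ (k,k)"]
    diag_rel_eq_rescale_mat[OF assms(4) Mstar_carrier[OF assms(1)]] assms
  by simp

lemma LambdaR_unique:
  assumes "A \<in> Mstar n" "0 < n" "C \<in> Mhat n" "diag_rel n A C D3 D4" "D4 $$ (0,0) = 1"
  shows "C = LambdaR A"
  using rescale_mat_in_Mhat_eq_LambdaR[of A n "\<lambda>k. D4 $$ (k,k)" "\<lambda>i. rinv (D3 $$ (i,i))"]
    diag_rel_eq_rescale_mat[OF assms(4) Mstar_carrier[OF assms(1)]] assms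
  by simp

theorem lemma2:
  fixes A :: "'a::ring_1 mat" and n :: nat
  assumes "n \<ge> 1" and "A \<in> Mstar n"
  shows "LambdaL A \<in> Mhat n
      \<and> (\<exists>D1 D2. diag_rel n A (LambdaL A) D1 D2 \<and> D1 $$ (0,0) = 1)
      \<and> (\<forall>B \<in> Mhat n. (\<exists>D1 D2. diag_rel n A B D1 D2 \<and> D1 $$ (0,0) = 1) \<longrightarrow> B = LambdaL A)
      \<and> LambdaR A \<in> Mhat n
      \<and> (\<exists>D3 D4. diag_rel n A (LambdaR A) D3 D4 \<and> D4 $$ (0,0) = 1)
      \<and> (\<forall>C \<in> Mhat n. (\<exists>D3 D4. diag_rel n A C D3 D4 \<and> D4 $$ (0,0) = 1) \<longrightarrow> C = LambdaR A)
      \<and> dsim n (LambdaL A) (LambdaR A) \<and> dsim n (LambdaR A) A"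
proof -
  have n: "0 < n" using assms(1) by simp
  have A: "A \<in> carrier_mat n n" and u: "is_unit_r (A $$ (0,0))"
    using assms(2) n by (auto simp: Mstar_carrier Mstar_unit)
  have L: "\<exists>D1 D2. diag_rel n A (LambdaL A) D1 D2 \<and> D1 $$ (0,0) = 1"
    using diag_rel_LambdaL[OF assms(2) n] n u by fastforce
  have R: "\<exists>D3 D4. diag_rel n A (LambdaR A) D3 D4 \<and> D4 $$ (0,0) = 1"
    using diag_rel_LambdaR[OF assms(2) n] n u by fastforce
  have "dsim n A (LambdaL A)" "dsim n A (LambdaR A)"
    using L R unfolding dsim_def by blast+
  then have "dsim n (LambdaL A) (LambdaR A)" "dsim n (LambdaR A) A"
    using A by (blast intro: dsim_trans dsim_sym dsim_carrier)+
  then show ?thesis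
    using L R assms(2) n LambdaL_in_Mhat LambdaR_in_Mhat LambdaL_unique LambdaR_unique by blast
qed

end
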